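(* For every $\mathrm{CCS}^-$ process $P$ that is not divergent and every $P'$ with $P\xrightarrow{\tau}P'$, we have $P\not\sim P'$.
   Context: $\mathrm{CCS}^-$ (CCScore without restriction) processes are given by the grammar $P,Q ::= 0 \mid a.P \mid \overline{a}.P \mid P\,|\,Q \mid\ !P$, where $a$ ranges over an infinite set of names. Actions are inputs $a$, outputs $\overline{a}$ (visible actions) and $\tau$. Transitions: $a.P \xrightarrow{a} P$; $\overline{a}.P \xrightarrow{\overline{a}} P$; if $P\xrightarrow{\gamma}P'$ then $P|Q\xrightarrow{\gamma}P'|Q$ and $Q|P\xrightarrow{\gamma}Q|P'$; if $P\xrightarrow{\overline a}P'$ and $Q\xrightarrow{a}Q'$ then $P|Q\xrightarrow{\tau}P'|Q'$ and $Q|P\xrightarrow{\tau}Q'|P'$; if $P\xrightarrow{\gamma}P'$ then $!P\xrightarrow{\gamma}P'\,|\,!P$; if $P\xrightarrow{a}P'$ and $P\xrightarrow{\overline a}P''$ then $!P\xrightarrow{\tau}P'|P''|\,!P$. A process is divergent if it has an infinite sequence of $\tau$-transitions; a relation $\mathcal R$ is divergence-sensitive if $P\,\mathcal R\,Q$ implies ($P$ divergent iff $Q$ divergent). Strong bisimilarity $\sim$ is the union of all symmetric divergence-sensitive relations $\mathcal R$ such that $P\,\mathcal R\,Q$ and $P\xrightarrow{\alpha}P'$ imply $Q\xrightarrow{\alpha}Q'$ for some $Q'$ with $P'\,\mathcal R\,Q'$. *)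

theory Defs
  imports Main
begin

datatype 'n proc =
    Nil
  | In 'n "'n proc"
  | Out 'n "'n proc"
  | Par "'n proc" "'n proc"
  | Bang "'n proc"

datatype 'n act = AIn 'n | AOut 'n | Tau

inductive step :: "'n proc \<Rightarrow> 'n act \<Rightarrow> 'n proc \<Rightarrow> bool" where
  t_in:   "step (In a P) (AIn a) P"
| t_out:  "step (Out a P) (AOut a) P"
| t_parL: "step P g P' \<Longrightarrow> step (Par P Q) g (Par P' Q)"
| t_parR: "step P g P' \<Longrightarrow> step (Par Q P) g (Par Q P')"
| t_comL: "step P (AOut a) P' \<Longrightarrow> step Q (AIn a) Q' \<Longrightarrow> step (Par P Q) Tau (Par P' Q')"
| t_comR: "step P (AOut a) P' \<Longrightarrow> step Q (AIn a) Q' \<Longrightarrow> step (Par Q P) Tau (Par Q' P')"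
| t_bang: "step P g P' \<Longrightarrow> step (Bang P) g (Par P' (Bang P))"
| t_bangcom: "step P (AIn a) P' \<Longrightarrow> step P (AOut a) P'' \<Longrightarrow>
              step (Bang P) Tau (Par (Par P' P'') (Bang P))"

definition divergent :: "'n proc \<Rightarrow> bool" where
  "divergent P \<longleftrightarrow> (\<exists>f :: nat \<Rightarrow> 'n proc. f 0 = P \<and> (\<forall>i. step (f i) Tau (f (Suc i))))"

definition div_sensitive :: "('n proc \<Rightarrow> 'n proc \<Rightarrow> bool) \<Rightarrow> bool" where
  "div_sensitive R \<longleftrightarrow> (\<forall>P Q. R P Q \<longrightarrow> (divergent P \<longleftrightarrow> divergent Q))"

definition strong_bisim :: "('n proc \<Rightarrow> 'n proc \<Rightarrow> bool) \<Rightarrow> bool" where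
  "strong_bisim R \<longleftrightarrow> symp R \<and> div_sensitive R \<and>
     (\<forall>P Q \<alpha> P'. R P Q \<and> step P \<alpha> P' \<longrightarrow> (\<exists>Q'. step Q \<alpha> Q' \<and> R P' Q'))"

definition bisimilar :: "'n proc \<Rightarrow> 'n proc \<Rightarrow> bool" (infix "\<sim>\<^sub>s" 50) where
  "P \<sim>\<^sub>s Q \<longleftrightarrow> (\<exists>R. strong_bisim R \<and> R P Q)"

end

theory Submission
  imports Defs
begin

text \<open>If a bisimulation relates \<open>P\<close> to a \<open>\<tau>\<close>-derivative \<open>P'\<close>, then \<open>P'\<close> must answer
  \<open>P \<rightarrow>\<^sub>\<tau> P'\<close> by a \<open>\<tau>\<close>-step to some \<open>P''\<close> related to \<open>P'\<close>, which must answer in turn, and so on: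
  the processes related to one of their own \<open>\<tau>\<close>-derivatives form a set closed under
  \<open>\<tau>\<close>-steps,
  so \<open>P\<close> diverges.\<close>

lemma divergent_if_tau_closed:
  assumes "P \<in> S" and closed: "\<And>X. X \<in> S \<Longrightarrow> \<exists>Y. Y \<in> S \<and> step X Tau Y"
  shows "divergent P"
proof -
  obtain succ where succ: "\<And>X. X \<in> S \<Longrightarrow> succ X \<in> S \<and> step X Tau (succ X)"
    using closed by metis
  define f where "f n = (succ ^^ n) P" for n
  have "f n \<in> S" for n
    by (induction n) (simp_all add: f_def \<open>P \<in> S\<close> succ)
  then have "\<forall>n. step (f n) Tau (f (Suc n))"
    using succ by (simp add: f_def)
  moreover have "f 0 = P" by (simp add: f_def)
  ultimately show ?thesis unfolding divergent_def by blast
qed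

lemma strong_bisim_tau_derivative_divergent:
  assumes "strong_bisim R" and "R P P'" and "step P Tau P'"
  shows "divergent P"
proof (rule divergent_if_tau_closed)
  show "P \<in> {X. \<exists>Y. R X Y \<and> step X Tau Y}"
    using assms by blast
next
  fix X assume "X \<in> {X. \<exists>Y. R X Y \<and> step X Tau Y}"
  then obtain Y where "R X Y" and "step X Tau Y" by blast
  moreover from this obtain Y' where "step Y Tau Y'" and "R Y Y'"
    using \<open>strong_bisim R\<close> unfolding strong_bisim_def by blast
  ultimately show "\<exists>Y. Y \<in> {X. \<exists>Y. R X Y \<and> step X Tau Y} \<and> step X Tau Y" by blast
qed

theorem mainTheorem9:
  fixes P P' :: "'n proc"
  assumes "infinite (UNIV :: 'n set)"
    and "\<not> divergent P"
    and "step P Tau P'"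
  shows "\<not> (P \<sim>\<^sub>s P')"
  using assms(2,3) strong_bisim_tau_derivative_divergent unfolding bisimilar_def by blast

end
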